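(* For every hinge-loss parameter $\tau>0$ and every Massart noise parameter $0\le\beta<1$, there exists a distribution $\tilde D_{\tau,\beta}$ over $B_1\times\{-1,1\}$, where $B_1\subseteq\mathbb{R}^2$ is the unit disk, whose marginal on $B_1$ is uniform, whose Bayes optimal classifier is a homogeneous halfspace $h_{\vec w^*}$, and which satisfies $|\Pr(y=1\mid\vec x)-\Pr(y=-1\mid\vec x)|\ge\beta$ for all $\vec x$, such that $\tau$-hinge loss minimization is not consistent on $\tilde D_{\tau,\beta}$ with respect to the class of halfspaces: there exist $\epsilon>0$ and a sample size $m(\epsilon)$ such that, with high probability over samples of size at least $m(\epsilon)$, $\tau$-hinge loss minimization outputs a classifier whose excess error $\mathrm{err}_{\tilde D_{\tau,\beta}}(\vec w)-\mathrm{err}_{\tilde D_{\tau,\beta}}(\vec w^* )$ is larger than $\epsilon$.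
   Context: For $\vec w\in\mathbb{R}^2$, $h_{\vec w}(\vec x)=\mathrm{sign}(\vec w\cdot\vec x)$. The $\tau$-hinge loss is $\ell_\tau(\vec w,\vec x,y)=\max\{0,1-\frac{y(\vec w\cdot\vec x)}{\tau}\}$. $\tau$-hinge loss minimization is the algorithm that, on a sample $W$, outputs some $\mathcal{A}_\tau(W)\in\mathrm{argmin}_{\vec w\in B_1}\frac1{|W|}\sum_{(\vec x,y)\in W}\ell_\tau(\vec w,\vec x,y)$. $\mathrm{err}_{\tilde D}(\vec w)=\Pr_{(\vec x,y)\sim\tilde D}[h_{\vec w}(\vec x)\ne y]$. *)

theory Defs
  imports "HOL-Probability.Probability"
begin

type_synonym point = "real ^ 2"

abbreviation B1 :: "point set" where "B1 \<equiv> cball 0 1"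

text \<open>Homogeneous halfspace classifier h_w(x) = sign(w . x) (sgn 0 = 0).\<close>
definition h :: "point \<Rightarrow> point \<Rightarrow> real" where
  "h w x = sgn (w \<bullet> x)"

definition hinge :: "real \<Rightarrow> point \<Rightarrow> point \<Rightarrow> real \<Rightarrow> real" where
  "hinge \<tau> w x y = max 0 (1 - y * (w \<bullet> x) / \<tau>)"

definition emp_hinge :: "real \<Rightarrow> nat \<Rightarrow> (nat \<Rightarrow> point \<times> real) \<Rightarrow> point \<Rightarrow> real" where
  "emp_hinge \<tau> n S w = (\<Sum>i<n. hinge \<tau> w (fst (S i)) (snd (S i))) / real n"

definition hinge_minimizer :: "real \<Rightarrow> nat \<Rightarrow> (nat \<Rightarrow> point \<times> real) \<Rightarrow> point \<Rightarrow> bool" where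
  "hinge_minimizer \<tau> n S w \<longleftrightarrow> w \<in> B1 \<and> (\<forall>v\<in>B1. emp_hinge \<tau> n S w \<le> emp_hinge \<tau> n S v)"

definition err :: "(point \<times> real) measure \<Rightarrow> point \<Rightarrow> real" where
  "err D w = measure D {p. h w (fst p) \<noteq> snd p}"

definition unifB1 :: "point measure" where
  "unifB1 = uniform_measure lborel B1"

end

theory Submission
  imports Defs
begin

text \<open>The distribution \<open>D_noisy \<nu>\<close> with \<open>\<nu> = (1 - \<beta>) / 4\<close> has uniform marginal on the disk
  and label \<open>sgn (x$1)\<close>, except that on the quadrant \<open>x$1, x$2 > 0\<close> the label is flipped with
  probability \<open>\<nu>\<close>; so \<open>h (axis 1 1)\<close> is Bayes optimal and the Massart margin is at least \<open>\<beta>\<close>.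
  The population \<open>\<tau>\<close>-hinge loss, however, is not minimized over \<open>B1\<close> at any nonnegative multiple
  of \<open>axis 1 1\<close>: at \<open>0\<close> it decreases along \<open>axis 1 1\<close>, and at \<open>r axis 1 1\<close> it decreases when \<open>w\<close>
  is tilted towards \<open>-axis 2 1\<close>, because the noisy quadrant leaves a negative correlation between
  label and \<open>x$2\<close> (pair \<open>x\<close> with its mirror image in the first axis). By compactness, every \<open>w\<close>
  whose loss is within some \<open>\<gamma>\<close> of the minimum puts mass at least \<open>\<psi> > 0\<close> on the region
  \<open>x$1 > 0 > w \<bullet> x\<close>, which costs excess error \<open>(1 - 2\<nu>) \<psi>\<close>. Finally, the empirical hinge loss
  converges uniformly on \<open>B1\<close> (Hoeffding's inequality on a finite net, plus Lipschitz continuity in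
  \<open>w\<close>), so with high probability every empirical minimizer has population loss within \<open>\<gamma>\<close>
  of the minimum.\<close>

section \<open>Geometry of the disk and its uniform measure\<close>

lemma inner_point: "(w::point) \<bullet> x = w$1 * x$1 + w$2 * x$2"
  by (simp add: inner_vec_def sum_2)

lemma norm_point_sq: "norm (x::point) ^ 2 = (x$1)^2 + (x$2)^2"
  unfolding power2_norm_eq_inner by (simp add: inner_point power2_eq_square)

lemma vector2_norm_less_1: "a^2 + b^2 < 1 \<Longrightarrow> norm (vector [a, b] :: point) < 1"
  using abs_square_less_1[of "norm (vector [a, b] :: point)"] by (simp add: norm_point_sq vector_2)

lemma B1_component_bound: "x \<in> B1 \<Longrightarrow> \<bar>x $ i\<bar> \<le> 1"
  using component_le_norm_cart[of x i] by auto

lemma B1_inner_bound: "x \<in> B1 \<Longrightarrow> \<bar>w \<bullet> x\<bar> \<le> norm w"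
  using Cauchy_Schwarz_ineq2[of w x] mult_left_le[of "norm x" "norm w"] by auto

lemma point_eq_axis_if_nth_1_eq_norm:
  assumes "w$1 = norm (w::point)"
  shows "w = norm w *\<^sub>R axis 1 1"
proof -
  have "(w$2)^2 = 0"
    using norm_point_sq[of w] assms by simp
  then show ?thesis
    using assms by (simp add: vec_eq_iff forall_2 axis_def)
qed

lemma B1_measurable [measurable]: "B1 \<in> sets borel"
  by simp

lemma emeasure_B1: "emeasure lborel B1 = ennreal pi"
  by (simp add: emeasure_cball unit_ball_vol_2)

lemma content_B1: "measure lborel B1 = pi"
  by (simp add: content_cball unit_ball_vol_2)

lemma prob_space_unifB1: "prob_space unifB1"
  unfolding unifB1_def
  by (intro prob_space_uniform_measure) (auto simp: emeasure_B1)

interpretation unifB1: prob_space unifB1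
  by (rule prob_space_unifB1)

lemma sets_unifB1 [simp, measurable_cong]: "sets unifB1 = sets borel"
  by (simp add: unifB1_def)

lemma space_unifB1 [simp]: "space unifB1 = UNIV"
  by (simp add: unifB1_def)

lemma AE_unifB1_in_B1: "AE x in unifB1. x \<in> B1"
  unfolding unifB1_def by (rule AE_uniform_measureI) auto

lemma measure_unifB1:
  assumes "S \<in> sets borel"
  shows "measure unifB1 S = measure lborel (B1 \<inter> S) / pi"
  unfolding unifB1_def content_B1[symmetric] using assms
  by (intro measure_uniform_measure) (auto simp: emeasure_B1)

lemma integrable_unifB1:
  fixes f :: "point \<Rightarrow> real"
  assumes [measurable]: "f \<in> borel_measurable borel" and "\<And>x. x \<in> B1 \<Longrightarrow> \<bar>f x\<bar> \<le> C"
  shows "integrable unifB1 f"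
  by (rule unifB1.integrable_const_bound[where B=C])
     (use AE_unifB1_in_B1 assms(2) in \<open>auto elim!: eventually_mono\<close>)

lemma integral_unifB1_mono:
  fixes f g :: "point \<Rightarrow> real"
  assumes "integrable unifB1 f" "integrable unifB1 g" "\<And>x. x \<in> B1 \<Longrightarrow> f x \<le> g x"
  shows "(\<integral>x. f x \<partial>unifB1) \<le> (\<integral>x. g x \<partial>unifB1)"
  by (rule integral_mono_AE) (use assms AE_unifB1_in_B1 in \<open>auto elim: eventually_mono\<close>)

lemma abs_integral_unifB1_le:
  fixes f :: "point \<Rightarrow> real"
  assumes "integrable unifB1 f" "\<And>x. x \<in> B1 \<Longrightarrow> \<bar>f x\<bar> \<le> K"
  shows "\<bar>\<integral>x. f x \<partial>unifB1\<bar> \<le> K"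
proof -
  have "\<bar>\<integral>x. f x \<partial>unifB1\<bar> \<le> (\<integral>x. \<bar>f x\<bar> \<partial>unifB1)"
    using integral_norm_bound[of unifB1 f] by simp
  also have "\<dots> \<le> (\<integral>x. K \<partial>unifB1)"
    using assms by (intro integral_unifB1_mono) auto
  also have "\<dots> = K"
    using unifB1.prob_space by simp
  finally show ?thesis .
qed

lemma integral_unifB1_pos:
  fixes f g :: "point \<Rightarrow> real"
  assumes [measurable]: "f \<in> borel_measurable borel"
    and f_bounded: "\<And>x. x \<in> B1 \<Longrightarrow> \<bar>f x\<bar> \<le> C"
    and g_le_f: "\<And>x. x \<in> B1 \<Longrightarrow> g x \<le> f x"
    and g_nonneg: "\<And>x. x \<in> B1 \<Longrightarrow> 0 \<le> g x"
    and "continuous_on UNIV g" and "norm p < 1" and "g p > 0"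
  shows "(\<integral>x. f x \<partial>unifB1) > 0"
proof -
  have "isCont g p"
    using assms(5) by (simp add: continuous_on_eq_continuous_at)
  then obtain d where "d > 0" and d: "\<And>x. dist x p < d \<Longrightarrow> dist (g x) (g p) < g p / 2"
    unfolding continuous_at_eps_delta using \<open>g p > 0\<close> by (metis half_gt_zero)
  define r where "r = min d (1 - norm p)"
  have "r > 0"
    using \<open>d > 0\<close> \<open>norm p < 1\<close> by (simp add: r_def)
  have ball_B1: "ball p r \<subseteq> B1"
  proof
    fix x assume "x \<in> ball p r"
    then have "norm (x - p) < 1 - norm p"
      by (simp add: r_def dist_norm norm_minus_commute)
    then show "x \<in> B1"
      using norm_triangle_ineq[of "x - p" p] by simp
  qed
  have g_large: "g x > g p / 2" if "x \<in> ball p r" for x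
  proof -
    have "dist (g x) (g p) < g p / 2"
      using d[of x] that by (auto simp: r_def dist_commute)
    then show ?thesis
      unfolding dist_real_def by arith
  qed
  have "(\<integral>x. (g p / 2) * indicator (ball p r) x \<partial>unifB1) \<le> (\<integral>x. f x \<partial>unifB1)"
  proof (rule integral_unifB1_mono)
    show "integrable unifB1 f"
      by (rule integrable_unifB1[OF _ f_bounded]) auto
    fix x assume "x \<in> B1"
    then show "g p / 2 * indicator (ball p r) x \<le> f x"
      using g_large[of x] g_le_f[of x] g_nonneg[of x] by (cases "x \<in> ball p r") auto
  qed (auto simp: less_top[symmetric])
  moreover have "measure unifB1 (ball p r) > 0"
    using ball_B1 \<open>r > 0\<close> by (simp add: measure_unifB1 Int_absorb1)
  then have "(\<integral>x. (g p / 2) * indicator (ball p r) x \<partial>unifB1) > 0"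
    using \<open>g p > 0\<close> by simp
  ultimately show ?thesis
    by linarith
qed

definition reflect2 :: "point \<Rightarrow> point" where
  "reflect2 x = (\<chi> i. if i = 2 then - (x$i) else x$i)"

lemma reflect2_nth_1 [simp]: "reflect2 x $ 1 = x $ 1"
  and reflect2_nth_2 [simp]: "reflect2 x $ 2 = - (x $ 2)"
  by (simp_all add: reflect2_def)

lemma norm_reflect2 [simp]: "norm (reflect2 x) = norm x"
  unfolding norm_vec_def by (intro L2_set_cong) (auto simp: reflect2_def)

lemma linear_reflect2: "linear reflect2"
  by (rule linearI) (auto simp: reflect2_def vec_eq_iff)

lemma reflect2_measurable [measurable]: "reflect2 \<in> borel_measurable borel"
  using linear_reflect2 by (intro borel_measurable_continuous_onI linear_continuous_on
      linear_conv_bounded_linear[THEN iffD1])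

lemma distr_lborel_reflect2: "distr lborel borel reflect2 = (lborel :: point measure)"
proof -
  define c :: "point \<Rightarrow> real" where "c j = (if j = axis 2 1 then -1 else 1)" for j
  have "(\<Sum>j\<in>Basis. (c j * (x \<bullet> j)) *\<^sub>R j) = reflect2 x" for x
    unfolding euclidean_representation_sum
    by (auto simp: Basis_vec_def inner_axis c_def reflect2_def axis_eq_axis)
  moreover have "(\<Prod>j\<in>(Basis::point set). \<bar>c j\<bar>) = 1"
    by (intro prod.neutral) (auto simp: c_def)
  moreover have "lborel = density (distr lborel borel (\<lambda>x. 0 + (\<Sum>j\<in>Basis. (c j * (x \<bullet> j)) *\<^sub>R j)))
      (\<lambda>_. (\<Prod>j\<in>(Basis::point set). \<bar>c j\<bar>))"
    by (rule lborel_affine_euclidean) (simp add: c_def)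
  ultimately show ?thesis
    by (simp add: density_1)
qed

lemma distr_unifB1_reflect2: "distr unifB1 borel reflect2 = unifB1"
proof (rule measure_eqI)
  fix A assume "A \<in> sets (distr unifB1 borel reflect2)"
  then have [measurable]: "A \<in> sets borel"
    by simp
  have [measurable]: "reflect2 -` A \<in> sets borel"
    using measurable_sets[OF reflect2_measurable, of A] by simp
  have "B1 \<inter> reflect2 -` A = reflect2 -` (B1 \<inter> A) \<inter> space lborel"
    by auto
  then have "emeasure lborel (B1 \<inter> reflect2 -` A) = emeasure lborel (B1 \<inter> A)"
    using emeasure_distr[of reflect2 lborel borel "B1 \<inter> A"] by (simp add: distr_lborel_reflect2)
  then show "emeasure (distr unifB1 borel reflect2) A = emeasure unifB1 A"
    by (subst emeasure_distr) (auto simp: unifB1_def emeasure_uniform_measure)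
qed simp

lemma integral_unifB1_reflect2:
  fixes f :: "point \<Rightarrow> real"
  assumes [measurable]: "f \<in> borel_measurable borel"
  shows "(\<integral>x. f (reflect2 x) \<partial>unifB1) = (\<integral>x. f x \<partial>unifB1)"
  using integral_distr[of reflect2 unifB1 borel f] by (simp add: distr_unifB1_reflect2)

lemma measure_unifB1_strip_le:
  assumes "\<delta> \<ge> 0"
  shows "measure unifB1 {x. \<bar>x$1 - c\<bar> \<le> \<delta>} \<le> 4 * \<delta> / pi"
proof -
  let ?S = "{x::point. \<bar>x$1 - c\<bar> \<le> \<delta>}"
  let ?C = "cbox (vector [c - \<delta>, -1]) (vector [c + \<delta>, 1]) :: point set"
  have [measurable]: "?S \<in> sets borel"
    by measurable
  have "B1 \<inter> ?S \<subseteq> ?C"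
    using B1_component_bound[of _ 2] by (auto simp: mem_box_cart forall_2 vector_2 abs_le_iff)
  then have "measure lborel (B1 \<inter> ?S) \<le> measure lborel ?C"
    by (intro measure_mono_fmeasurable) auto
  also have "\<dots> = 4 * \<delta>"
  proof -
    have "vector [c, 0] \<in> ?C"
      using assms by (auto simp: mem_box_cart forall_2 vector_2)
    then show ?thesis
      by (subst content_cbox_cart) (auto simp: UNIV_2 vector_2)
  qed
  finally show ?thesis
    by (simp add: measure_unifB1 divide_right_mono)
qed

lemma measure_unifB1_kink_band_le:
  fixes r :: real
  assumes "r > 0" "e \<ge> 0"
  shows "measure unifB1 {x. \<bar>\<bar>r * x$1\<bar> - \<tau>\<bar> \<le> e} \<le> 8 * e / (r * pi)"
proof -
  let ?S = "\<lambda>c. {x::point. \<bar>x$1 - c\<bar> \<le> e / r}"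
  have "{x. \<bar>\<bar>r * x$1\<bar> - \<tau>\<bar> \<le> e} \<subseteq> ?S (\<tau>/r) \<union> ?S (-\<tau>/r)"
  proof
    fix x :: point assume "x \<in> {x. \<bar>\<bar>r * x$1\<bar> - \<tau>\<bar> \<le> e}"
    then have "\<bar>r * x$1 - \<tau>\<bar> \<le> e \<or> \<bar>r * x$1 + \<tau>\<bar> \<le> e"
      by (cases "x$1 \<ge> 0") (auto simp: abs_mult abs_le_iff)
    moreover have "\<bar>x$1 - \<tau>/r\<bar> = \<bar>r * x$1 - \<tau>\<bar> / r" "\<bar>x$1 + \<tau>/r\<bar> = \<bar>r * x$1 + \<tau>\<bar> / r"
      using assms(1) by (simp_all add: field_simps)
    ultimately show "x \<in> ?S (\<tau>/r) \<union> ?S (-\<tau>/r)"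
      using assms(1) by (auto simp: divide_right_mono)
  qed
  then have "measure unifB1 {x. \<bar>\<bar>r * x$1\<bar> - \<tau>\<bar> \<le> e} \<le> measure unifB1 (?S (\<tau>/r) \<union> ?S (-\<tau>/r))"
    by (intro unifB1.finite_measure_mono) auto
  also have "\<dots> \<le> measure unifB1 (?S (\<tau>/r)) + measure unifB1 (?S (-\<tau>/r))"
    by (intro measure_Un_le) auto
  also have "\<dots> \<le> 4 * (e/r) / pi + 4 * (e/r) / pi"
    using assms by (intro add_mono measure_unifB1_strip_le) auto
  finally show ?thesis
    by (simp add: field_simps)
qed

lemma AE_unifB1_nth_1_neq_0: "AE x in unifB1. x$1 \<noteq> 0"
proof -
  have "AE x in lborel. (x::point) \<bullet> axis 1 1 \<noteq> 0"
    by (rule AE_lborel_inner_neq) (auto simp: Basis_vec_def)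
  then show ?thesis
    unfolding unifB1_def by (intro AE_uniform_measureI) (auto simp: inner_axis elim: eventually_mono)
qed

lemma hinge_nonneg: "hinge \<tau> w x y \<ge> 0"
  by (simp add: hinge_def)

lemma hinge_lipschitz:
  assumes "\<tau> > 0" "x \<in> B1" "y \<in> {-1,1}"
  shows "\<bar>hinge \<tau> w x y - hinge \<tau> v x y\<bar> \<le> norm (w - v) / \<tau>"
proof -
  have "\<bar>y * (w \<bullet> x) - y * (v \<bullet> x)\<bar> \<le> norm (w - v)"
    using B1_inner_bound[OF assms(2), of "w - v"] assms(3)
    by (auto simp: inner_diff_left abs_minus_commute)
  then have "\<bar>(1 - y * (w \<bullet> x) / \<tau>) - (1 - y * (v \<bullet> x) / \<tau>)\<bar> \<le> norm (w - v) / \<tau>"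
    using assms(1) by (simp add: diff_divide_distrib[symmetric] abs_minus_commute divide_right_mono)
  then show ?thesis
    unfolding hinge_def by (smt (verit) max_def)
qed

lemma hinge_bounded:
  assumes "\<tau> > 0" "x \<in> B1" "y \<in> {-1,1}"
  shows "hinge \<tau> w x y \<le> 1 + norm w / \<tau>"
proof -
  have "\<bar>y * (w \<bullet> x)\<bar> \<le> norm w"
    using B1_inner_bound[OF assms(2), of w] assms(3) by auto
  then have "\<bar>y * (w \<bullet> x) / \<tau>\<bar> \<le> norm w / \<tau>"
    using assms(1) by (simp add: divide_right_mono)
  then show ?thesis
    unfolding hinge_def by linarith
qed

text \<open>Moving \<open>a\<close> by \<open>t b\<close> changes \<open>max 0 (1 - a/\<tau>)\<close> by at most the linear term, except on the
  band where the kink at \<open>a = \<tau>\<close> may be crossed.\<close>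

lemma hinge_perturb_le:
  fixes a b t D \<tau> :: real
  assumes "\<tau> > 0" "t > 0" "\<bar>b\<bar> \<le> D"
  shows "max 0 (1 - (a + t*b)/\<tau>) - max 0 (1 - a/\<tau>)
     \<le> -(t/\<tau>) * b * (if a < \<tau> then 1 else 0) + (2*t*D/\<tau>) * (if \<bar>a - \<tau>\<bar> \<le> t*D then 1 else 0)"
proof -
  have tb: "\<bar>t*b\<bar> \<le> t*D"
    using assms by (simp add: abs_mult mult_left_mono)
  let ?I = "if a < \<tau> then 1 else (0::real)" and ?J = "if \<bar>a - \<tau>\<bar> \<le> t*D then 1 else (0::real)"
  have "max 0 (\<tau> - a - t*b) - max 0 (\<tau> - a) \<le> -(t*b) * ?I + (2*(t*D)) * ?J"
    using tb by (cases "\<bar>a - \<tau>\<bar> \<le> t*D") (auto simp: abs_le_iff max_def)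
  moreover have "max 0 (1 - c/\<tau>) = max 0 (\<tau> - c) / \<tau>" for c
    using assms(1) by (simp add: max_def field_simps)
  moreover have "-(t/\<tau>) * b * ?I + (2*t*D/\<tau>) * ?J = (-(t*b) * ?I + (2*(t*D)) * ?J) / \<tau>"
    using assms(1) by (simp add: field_simps)
  ultimately show ?thesis
    using assms(1) by (simp add: diff_divide_distrib[symmetric] divide_right_mono diff_diff_add)
qed

lemma hinge_step_le:
  assumes "\<tau> > 0" "t > 0" "\<bar>d \<bullet> x\<bar> \<le> D" "y \<in> {-1, 1}"
  shows "hinge \<tau> (w + t *\<^sub>R d) x y - hinge \<tau> w x y
     \<le> -(t/\<tau>) * (y * (d \<bullet> x) * (if y * (w \<bullet> x) < \<tau> then 1 else 0))
        + (2*t*D/\<tau>) * indicator {x. \<bar>\<bar>w \<bullet> x\<bar> - \<tau>\<bar> \<le> t*D} x"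
proof -
  have "\<bar>y * (d \<bullet> x)\<bar> \<le> D"
    using assms(3,4) by auto
  moreover have "hinge \<tau> (w + t *\<^sub>R d) x y = max 0 (1 - (y * (w \<bullet> x) + t * (y * (d \<bullet> x))) / \<tau>)"
    by (simp add: hinge_def inner_add_left distrib_left mult.left_commute)
  moreover have "hinge \<tau> w x y = max 0 (1 - y * (w \<bullet> x) / \<tau>)"
    by (simp add: hinge_def)
  ultimately have "hinge \<tau> (w + t *\<^sub>R d) x y - hinge \<tau> w x y
     \<le> -(t/\<tau>) * (y * (d \<bullet> x)) * (if y * (w \<bullet> x) < \<tau> then 1 else 0)
        + (2*t*D/\<tau>) * (if \<bar>y * (w \<bullet> x) - \<tau>\<bar> \<le> t*D then 1 else 0)"
    using hinge_perturb_le[OF assms(1,2)] by presburger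
  moreover have "(2*t*D/\<tau>) * (if \<bar>y * (w \<bullet> x) - \<tau>\<bar> \<le> t*D then 1 else 0)
      \<le> (2*t*D/\<tau>) * indicator {x. \<bar>\<bar>w \<bullet> x\<bar> - \<tau>\<bar> \<le> t*D} x"
    using assms abs_ge_zero[of "d \<bullet> x"] by (intro mult_left_mono) (auto simp: indicator_def)
  ultimately show ?thesis
    by linarith
qed

section \<open>The noisy distribution\<close>

text \<open>The label is \<open>sgn (x$1)\<close> (with \<open>-1\<close> on \<open>x$1 = 0\<close>), except that on the open quadrant
  \<open>x$1 > 0, x$2 > 0\<close> it is flipped to \<open>-1\<close> when a coin \<open>b\<close> of bias \<open>\<nu>\<close> comes up \<open>True\<close>;
  \<open>eta \<nu> x\<close> is the resulting probability of the label \<open>1\<close>, and \<open>label_avg \<nu> g x\<close> is the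
  conditional expectation of \<open>g x y\<close> given \<open>x\<close> (see \<open>integral_D_noisy\<close>).\<close>

definition noisy_label :: "point \<Rightarrow> bool \<Rightarrow> real" where
  "noisy_label x b = (if x$1 > 0 then (if x$2 > 0 \<and> b then -1 else 1) else -1)"

definition eta :: "real \<Rightarrow> point \<Rightarrow> real" where
  "eta \<nu> x = (if x$1 > 0 then (if x$2 > 0 then 1 - \<nu> else 1) else 0)"

abbreviation coin_space :: "real \<Rightarrow> (point \<times> bool) measure" where
  "coin_space \<nu> \<equiv> unifB1 \<Otimes>\<^sub>M measure_pmf (bernoulli_pmf \<nu>)"

definition D_noisy :: "real \<Rightarrow> (point \<times> real) measure" where
  "D_noisy \<nu> = distr (coin_space \<nu>) (borel \<Otimes>\<^sub>M borel) (\<lambda>(x, b). (x, noisy_label x b))"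

definition label_avg :: "real \<Rightarrow> (point \<Rightarrow> real \<Rightarrow> real) \<Rightarrow> point \<Rightarrow> real" where
  "label_avg \<nu> g x = \<nu> * g x (noisy_label x True) + (1 - \<nu>) * g x (noisy_label x False)"

lemma noisy_label_cases: "noisy_label x b = -1 \<or> noisy_label x b = 1"
  by (auto simp: noisy_label_def)

lemma noisy_label_measurable [measurable]: "(\<lambda>x. noisy_label x b) \<in> borel_measurable borel"
  unfolding noisy_label_def by measurable

lemma eta_measurable [measurable]: "eta \<nu> \<in> borel_measurable borel"
  unfolding eta_def by measurable

interpretation coin: pair_prob_space unifB1 "measure_pmf (bernoulli_pmf \<nu>)" for \<nu>
  by (intro pair_prob_space.intro pair_sigma_finite.intro prob_space_imp_sigma_finite
      prob_space_unifB1 prob_space_measure_pmf)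

lemma noisy_labelling_measurable:
  "(\<lambda>(x, b). (x, noisy_label x b)) \<in> coin_space \<nu> \<rightarrow>\<^sub>M borel \<Otimes>\<^sub>M borel"
proof -
  have "(\<lambda>(x, b). (x, noisy_label x b)) =
      (\<lambda>p. (fst p, if snd p then noisy_label (fst p) True else noisy_label (fst p) False))"
    by (auto simp: fun_eq_iff)
  also have "\<dots> \<in> coin_space \<nu> \<rightarrow>\<^sub>M borel \<Otimes>\<^sub>M borel"
    by measurable
  finally show ?thesis .
qed

lemma prob_space_D_noisy: "prob_space (D_noisy \<nu>)"
  unfolding D_noisy_def by (intro coin.P.prob_space_distr noisy_labelling_measurable)

lemma sets_D_noisy [simp, measurable_cong]: "sets (D_noisy \<nu>) = sets (borel \<Otimes>\<^sub>M borel)"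
  by (simp add: D_noisy_def)

lemma space_D_noisy [simp]: "space (D_noisy \<nu>) = UNIV"
  by (simp add: D_noisy_def space_pair_measure)

lemma AE_coin_space: "AE p in coin_space \<nu>. fst p \<in> B1"
  by (rule coin.AE_pair_measure) (auto intro: AE_unifB1_in_B1[THEN eventually_mono])

lemma AE_D_noisy: "AE p in D_noisy \<nu>. fst p \<in> B1 \<and> snd p \<in> {-1, 1}"
  unfolding D_noisy_def using AE_coin_space[of \<nu>]
  by (subst AE_distr_iff[OF noisy_labelling_measurable])
     (auto elim!: eventually_mono simp: noisy_label_cases split: prod.splits)

lemma integral_D_noisy:
  assumes "0 \<le> \<nu>" "\<nu> \<le> 1"
    and [measurable]: "g \<in> borel_measurable (borel \<Otimes>\<^sub>M borel)"
    and g_bounded: "\<And>x y. x \<in> B1 \<Longrightarrow> y \<in> {-1,1} \<Longrightarrow> \<bar>g (x, y)\<bar> \<le> C"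
  shows "integral\<^sup>L (D_noisy \<nu>) g = (\<integral>x. label_avg \<nu> (\<lambda>x y. g (x, y)) x \<partial>unifB1)"
proof -
  have "integral\<^sup>L (D_noisy \<nu>) g = (\<integral>p. g (fst p, noisy_label (fst p) (snd p)) \<partial>coin_space \<nu>)"
    unfolding D_noisy_def
    by (subst integral_distr[OF noisy_labelling_measurable]) (auto simp: case_prod_beta)
  also have "\<dots> = (\<integral>x. \<integral>b. g (x, noisy_label x b) \<partial>bernoulli_pmf \<nu> \<partial>unifB1)"
  proof -
    have "integrable (coin_space \<nu>) (\<lambda>p. g (fst p, noisy_label (fst p) (snd p)))"
      using AE_coin_space[of \<nu>]
      by (intro coin.P.integrable_const_bound[where B=C])
         (auto elim!: eventually_mono intro!: g_bounded simp: noisy_label_def)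
    from coin.integral_fst'[OF this] show ?thesis
      by simp
  qed
  also have "\<dots> = (\<integral>x. label_avg \<nu> (\<lambda>x y. g (x, y)) x \<partial>unifB1)"
    using assms(1,2) by (simp add: label_avg_def mult.commute)
  finally show ?thesis .
qed

lemma distr_D_noisy_fst: "distr (D_noisy \<nu>) borel fst = unifB1"
proof -
  have "distr (D_noisy \<nu>) borel fst = distr (coin_space \<nu>) borel (fst \<circ> (\<lambda>(x, b). (x, noisy_label x b)))"
    unfolding D_noisy_def by (rule distr_distr[OF _ noisy_labelling_measurable]) auto
  also have "\<dots> = distr (coin_space \<nu>) unifB1 fst"
    by (rule distr_cong) (auto simp: split: prod.splits)
  also have "\<dots> = unifB1"
    by (rule measure_pmf.distr_pair_fst)
  finally show ?thesis .
qed

lemma measure_D_noisy_label_1: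
  assumes "0 \<le> \<nu>" "\<nu> \<le> 1" and [measurable]: "A \<in> sets borel"
  shows "measure (D_noisy \<nu>) (A \<times> {1}) = (\<integral>x. indicator A x * eta \<nu> x \<partial>unifB1)"
proof -
  have [measurable]: "A \<times> {1::real} \<in> sets (borel \<Otimes>\<^sub>M borel)"
    by measurable
  have "measure (D_noisy \<nu>) (A \<times> {1}) = integral\<^sup>L (D_noisy \<nu>) (indicator (A \<times> {1}))"
    by simp
  also have "\<dots> = (\<integral>x. label_avg \<nu> (\<lambda>x y. indicator (A \<times> {1}) (x, y)) x \<partial>unifB1)"
    using assms(1,2) by (rule integral_D_noisy[where C=1]) auto
  also have "\<dots> = (\<integral>x. indicator A x * eta \<nu> x \<partial>unifB1)"
    by (intro Bochner_Integration.integral_cong refl)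
       (auto simp: label_avg_def noisy_label_def eta_def indicator_def)
  finally show ?thesis .
qed

lemma label_avg_measurable [measurable]:
  assumes [measurable]: "(\<lambda>x. g x (noisy_label x True)) \<in> borel_measurable borel"
     "(\<lambda>x. g x (noisy_label x False)) \<in> borel_measurable borel"
  shows "label_avg \<nu> g \<in> borel_measurable borel"
  unfolding label_avg_def by measurable

lemma label_avg_affine: "label_avg \<nu> (\<lambda>x y. c * g x y + k x) x = c * label_avg \<nu> g x + k x"
  by (simp add: label_avg_def algebra_simps)

lemma abs_label_avg_le:
  assumes "0 \<le> \<nu>" "\<nu> \<le> 1" "\<And>y. y \<in> {-1,1} \<Longrightarrow> \<bar>g x y\<bar> \<le> C"
  shows "\<bar>label_avg \<nu> g x\<bar> \<le> C"
proof -
  have "\<bar>g x (noisy_label x b)\<bar> \<le> C" for b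
    using assms(3) noisy_label_cases[of x b] by auto
  then have "\<bar>label_avg \<nu> g x\<bar> \<le> \<nu> * C + (1 - \<nu>) * C"
    unfolding label_avg_def using assms(1,2)
    by (intro order_trans[OF abs_triangle_ineq] add_mono)
       (auto simp: abs_mult intro!: mult_left_mono)
  then show ?thesis
    by (simp add: algebra_simps)
qed

lemma integrable_label_avg:
  assumes [measurable]: "(\<lambda>x. g x (noisy_label x True)) \<in> borel_measurable borel"
     "(\<lambda>x. g x (noisy_label x False)) \<in> borel_measurable borel"
    and "0 \<le> \<nu>" "\<nu> \<le> 1" "\<And>x y. x \<in> B1 \<Longrightarrow> y \<in> {-1,1} \<Longrightarrow> \<bar>g x y\<bar> \<le> C"
  shows "integrable unifB1 (label_avg \<nu> g)"
  by (rule integrable_unifB1[where C=C]) (use assms abs_label_avg_le in auto)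

section \<open>The population hinge loss and its descent directions\<close>

definition pop_hinge :: "real \<Rightarrow> real \<Rightarrow> point \<Rightarrow> real" where
  "pop_hinge \<nu> \<tau> w = (\<integral>x. label_avg \<nu> (hinge \<tau> w) x \<partial>unifB1)"

lemma hinge_noisy_label_measurable [measurable]:
  "(\<lambda>x. hinge \<tau> w x (noisy_label x b)) \<in> borel_measurable borel"
  unfolding hinge_def by measurable

lemma hinge_pair_measurable [measurable]:
  "(\<lambda>p. hinge \<tau> w (fst p) (snd p)) \<in> borel_measurable (borel \<Otimes>\<^sub>M borel)"
  unfolding hinge_def by measurable

lemma integrable_label_avg_hinge:
  assumes "\<tau> > 0" "0 \<le> \<nu>" "\<nu> \<le> 1"
  shows "integrable unifB1 (label_avg \<nu> (hinge \<tau> w))"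
  using assms hinge_bounded[OF assms(1)] hinge_nonneg
  by (intro integrable_label_avg[where C="1 + norm w / \<tau>"]) (auto simp: abs_le_iff)

lemma integral_D_noisy_hinge:
  assumes "\<tau> > 0" "0 \<le> \<nu>" "\<nu> \<le> 1"
  shows "(\<integral>p. hinge \<tau> w (fst p) (snd p) \<partial>D_noisy \<nu>) = pop_hinge \<nu> \<tau> w"
  unfolding pop_hinge_def using assms hinge_bounded[OF assms(1)] hinge_nonneg
  by (subst integral_D_noisy[where C="1 + norm w / \<tau>"]) (auto simp: abs_le_iff)

lemma pop_hinge_lipschitz:
  assumes "\<tau> > 0" "0 \<le> \<nu>" "\<nu> \<le> 1"
  shows "\<bar>pop_hinge \<nu> \<tau> w - pop_hinge \<nu> \<tau> v\<bar> \<le> norm (w - v) / \<tau>"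
proof -
  have "pop_hinge \<nu> \<tau> w - pop_hinge \<nu> \<tau> v
      = (\<integral>x. label_avg \<nu> (hinge \<tau> w) x - label_avg \<nu> (hinge \<tau> v) x \<partial>unifB1)"
    unfolding pop_hinge_def using integrable_label_avg_hinge[OF assms] by simp
  also have "\<dots> = (\<integral>x. label_avg \<nu> (\<lambda>x y. hinge \<tau> w x y - hinge \<tau> v x y) x \<partial>unifB1)"
    by (simp add: label_avg_def algebra_simps)
  also have "\<bar>\<dots>\<bar> \<le> norm (w - v) / \<tau>"
    using assms hinge_lipschitz[OF assms(1)]
    by (intro abs_integral_unifB1_le integrable_label_avg[where C="norm (w - v) / \<tau>"]
        abs_label_avg_le) auto
  finally show ?thesis .
qed

lemma continuous_on_pop_hinge:
  assumes "\<tau> > 0" "0 \<le> \<nu>" "\<nu> \<le> 1"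
  shows "continuous_on UNIV (pop_hinge \<nu> \<tau>)"
proof (rule lipschitz_on_continuous_on)
  show "(1 / \<tau>)-lipschitz_on UNIV (pop_hinge \<nu> \<tau>)"
    using pop_hinge_lipschitz[OF assms] assms(1) by (intro lipschitz_onI) (auto simp: dist_norm dist_real_def)
qed

text \<open>The error of the linearisation in \<open>w\<close> is supported on the band where \<open>\<bar>w \<bullet> x\<bar>\<close> is
  within \<open>t D\<close> of the kink \<open>\<tau>\<close>.\<close>

lemma pop_hinge_step_le:
  assumes "\<tau> > 0" "t > 0" "0 \<le> \<nu>" "\<nu> \<le> 1" and d_bounded: "\<And>x. x \<in> B1 \<Longrightarrow> \<bar>d \<bullet> x\<bar> \<le> D"
  shows "pop_hinge \<nu> \<tau> (w + t *\<^sub>R d) \<le> pop_hinge \<nu> \<tau> w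
     - (t/\<tau>) * (\<integral>x. label_avg \<nu> (\<lambda>x y. y * (d \<bullet> x) * (if y * (w \<bullet> x) < \<tau> then 1 else 0)) x \<partial>unifB1)
     + (2*t*D/\<tau>) * measure unifB1 {x. \<bar>\<bar>w \<bullet> x\<bar> - \<tau>\<bar> \<le> t*D}"
proof -
  let ?A = "label_avg \<nu> (\<lambda>x y. y * (d \<bullet> x) * (if y * (w \<bullet> x) < \<tau> then 1 else 0))"
  let ?S = "{x. \<bar>\<bar>w \<bullet> x\<bar> - \<tau>\<bar> \<le> t*D}"
  have [measurable]: "?S \<in> sets borel"
    by measurable
  have int_A: "integrable unifB1 ?A"
    using assms(3,4) d_bounded
    by (intro integrable_label_avg[where C=D]) (auto simp: abs_mult intro: order_trans[OF abs_ge_zero])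
  have int_S: "integrable unifB1 (indicator ?S :: point \<Rightarrow> real)"
    by (intro integrable_real_indicator) (auto simp: less_top[symmetric])
  have pointwise: "label_avg \<nu> (hinge \<tau> (w + t *\<^sub>R d)) x - label_avg \<nu> (hinge \<tau> w) x
      \<le> -(t/\<tau>) * ?A x + (2*t*D/\<tau>) * indicator ?S x" if "x \<in> B1" for x
  proof -
    have "label_avg \<nu> (hinge \<tau> (w + t *\<^sub>R d)) x - label_avg \<nu> (hinge \<tau> w) x
        = label_avg \<nu> (\<lambda>x y. hinge \<tau> (w + t *\<^sub>R d) x y - hinge \<tau> w x y) x"
      by (simp add: label_avg_def algebra_simps)
    also have "\<dots> \<le> label_avg \<nu> (\<lambda>x y. -(t/\<tau>) * (y * (d \<bullet> x) * (if y * (w \<bullet> x) < \<tau> then 1 else 0))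
        + (2*t*D/\<tau>) * indicator ?S x) x"
      unfolding label_avg_def using assms(1-4) d_bounded[OF that] noisy_label_cases
      by (intro add_mono mult_left_mono hinge_step_le) auto
    also have "\<dots> = -(t/\<tau>) * ?A x + (2*t*D/\<tau>) * indicator ?S x"
      by (rule label_avg_affine)
    finally show ?thesis .
  qed
  have "pop_hinge \<nu> \<tau> (w + t *\<^sub>R d) - pop_hinge \<nu> \<tau> w
      = (\<integral>x. label_avg \<nu> (hinge \<tau> (w + t *\<^sub>R d)) x - label_avg \<nu> (hinge \<tau> w) x \<partial>unifB1)"
    unfolding pop_hinge_def using integrable_label_avg_hinge assms by simp
  also have "\<dots> \<le> (\<integral>x. -(t/\<tau>) * ?A x + (2*t*D/\<tau>) * indicator ?S x \<partial>unifB1)"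
    using pointwise integrable_label_avg_hinge assms int_A int_S
    by (intro integral_unifB1_mono) auto
  also have "\<dots> = -(t/\<tau>) * (\<integral>x. ?A x \<partial>unifB1) + (2*t*D/\<tau>) * measure unifB1 ?S"
    using int_A int_S by simp
  finally show ?thesis
    by simp
qed

lemma label_avg_x2_reflect2_le:
  fixes r :: real
  assumes "\<tau> > 0" "0 \<le> \<nu>" "r > 0"
  defines "g \<equiv> label_avg \<nu> (\<lambda>x y. y * x$2 * (if y * (r * x$1) < \<tau> then 1 else 0))"
  shows "g x + g (reflect2 x) \<le> - (\<nu> * \<bar>x$2\<bar> * (if x$1 > 0 then 1 else 0))"
proof -
  define I :: real where "I = (if r * x$1 < \<tau> then 1 else 0)"
  have I: "0 \<le> I" "I \<le> 1"
    by (simp_all add: I_def)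
  have neg: "- (r * x$1) < \<tau>" if "x$1 > 0"
    using assms(1,3) that by (smt (verit) mult_pos_pos)
  consider "x$1 > 0" "x$2 > 0" | "x$1 > 0" "x$2 < 0" | "x$1 > 0" "x$2 = 0" | "\<not> x$1 > 0"
    by linarith
  then show ?thesis
  proof cases
    case 1
    with neg have "g x + g (reflect2 x) = - (\<nu> * x$2) - (\<nu> * x$2) * I"
      by (simp add: g_def label_avg_def noisy_label_def I_def algebra_simps)
    then show ?thesis
      using 1 I assms(2) by (simp add: mult_nonneg_nonneg)
  next
    case 2
    with neg have "g x + g (reflect2 x) = \<nu> * x$2 + (\<nu> * x$2) * I"
      by (simp add: g_def label_avg_def noisy_label_def I_def algebra_simps)
    then show ?thesis
      using 2 I assms(2) by (simp add: mult_nonneg_nonpos mult_nonpos_nonneg)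
  qed (simp_all add: g_def label_avg_def noisy_label_def algebra_simps)
qed

text \<open>Pairing \<open>x\<close> with its mirror image \<open>reflect2 x\<close>, the noise on the quadrant \<open>x$2 > 0\<close> leaves
  a negative net correlation of the label with \<open>x$2\<close> (among the points with nonzero hinge slope).\<close>

lemma integral_label_avg_x2_neg:
  fixes r :: real
  assumes "\<tau> > 0" "0 < \<nu>" "\<nu> \<le> 1" "r > 0"
  shows "(\<integral>x. label_avg \<nu> (\<lambda>x y. y * x$2 * (if y * (r * x$1) < \<tau> then 1 else 0)) x \<partial>unifB1) < 0"
proof -
  define g where "g = label_avg \<nu> (\<lambda>x y. y * x$2 * (if y * (r * x$1) < \<tau> then 1 else 0))"
  have [measurable]: "g \<in> borel_measurable borel"
    unfolding g_def by measurable
  have g_bounded: "\<bar>g x\<bar> \<le> 1" if "x \<in> B1" for x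
    unfolding g_def using assms B1_component_bound[OF that, of 2]
    by (intro abs_label_avg_le) (auto simp: abs_mult)
  have "(\<integral>x. -(g x + g (reflect2 x)) \<partial>unifB1) > 0"
  proof (rule integral_unifB1_pos[where C=2 and g="\<lambda>x. \<nu> * \<bar>x$2\<bar> * max 0 (x$1)"
        and p="vector [1/2, 1/2]"])
    fix x :: point assume x: "x \<in> B1"
    then show "\<bar>-(g x + g (reflect2 x))\<bar> \<le> 2"
      using g_bounded[of x] g_bounded[of "reflect2 x"] by simp
    have "\<nu> * \<bar>x$2\<bar> * max 0 (x$1) \<le> \<nu> * \<bar>x$2\<bar> * (if x$1 > 0 then 1 else 0)"
      using B1_component_bound[OF x, of 1] assms by (intro mult_left_mono) auto
    then show "\<nu> * \<bar>x$2\<bar> * max 0 (x$1) \<le> -(g x + g (reflect2 x))"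
      using label_avg_x2_reflect2_le[of \<tau> \<nu> r x] assms unfolding g_def by linarith
  qed (use assms in \<open>auto intro!: continuous_intros vector2_norm_less_1
        simp: vector_2 power2_eq_square\<close>)
  moreover have "(\<integral>x. g (reflect2 x) \<partial>unifB1) = (\<integral>x. g x \<partial>unifB1)"
    by (rule integral_unifB1_reflect2) simp
  moreover have "integrable unifB1 g" "integrable unifB1 (\<lambda>x. g (reflect2 x))"
    using g_bounded by (auto intro!: integrable_unifB1[where C=1])
  ultimately show ?thesis
    unfolding g_def[symmetric] by simp
qed

lemma integral_label_avg_x1_pos:
  assumes "0 \<le> \<nu>" "\<nu> < 1/2"
  shows "(\<integral>x. label_avg \<nu> (\<lambda>x y. y * x$1) x \<partial>unifB1) > 0"
proof (rule integral_unifB1_pos[where C=1 and g="\<lambda>x. (1 - 2*\<nu>) * max 0 (x$1)" and p="vector [1/2, 0]"])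
  fix x :: point assume x: "x \<in> B1"
  show "\<bar>label_avg \<nu> (\<lambda>x y. y * x $ 1) x\<bar> \<le> 1"
    using assms B1_component_bound[OF x] by (intro abs_label_avg_le) (auto simp: abs_mult)
  show "(1 - 2 * \<nu>) * max 0 (x $ 1) \<le> label_avg \<nu> (\<lambda>x y. y * x $ 1) x"
    using assms by (auto simp: label_avg_def noisy_label_def algebra_simps max_def)
qed (use assms in \<open>auto intro!: continuous_intros vector2_norm_less_1
      simp: vector_2 power2_eq_square\<close>)

lemma pop_hinge_descent_zero:
  assumes "\<tau> > 0" "0 \<le> \<nu>" "\<nu> < 1/2"
  shows "\<exists>v\<in>B1. pop_hinge \<nu> \<tau> v < pop_hinge \<nu> \<tau> 0"
proof
  define t where "t = min 1 (\<tau>/2)"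
  have t: "0 < t" "t \<le> 1" "t < \<tau>"
    using assms by (auto simp: t_def)
  have "pop_hinge \<nu> \<tau> (0 + t *\<^sub>R axis 1 1) \<le> pop_hinge \<nu> \<tau> 0
      - (t/\<tau>) * (\<integral>x. label_avg \<nu> (\<lambda>x y. y * (axis 1 1 \<bullet> x) * (if y * (0 \<bullet> x) < \<tau> then 1 else 0)) x \<partial>unifB1)
      + (2*t*1/\<tau>) * measure unifB1 {x::point. \<bar>\<bar>0 \<bullet> x\<bar> - \<tau>\<bar> \<le> t*1}"
    using assms B1_component_bound
    by (intro pop_hinge_step_le[OF assms(1) t(1) assms(2)]) (auto simp: inner_axis')
  also have "(\<lambda>x y. y * (axis 1 1 \<bullet> x) * (if y * (0 \<bullet> x) < \<tau> then 1 else 0)) = (\<lambda>x y. y * x$1)"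
    using assms(1) by (simp add: inner_axis')
  also have "{x::point. \<bar>\<bar>0 \<bullet> x\<bar> - \<tau>\<bar> \<le> t*1} = {}"
    using t assms(1) by auto
  also have "pop_hinge \<nu> \<tau> 0 - (t/\<tau>) * (\<integral>x. label_avg \<nu> (\<lambda>x y. y * x$1) x \<partial>unifB1)
      + (2*t*1/\<tau>) * measure unifB1 {} < pop_hinge \<nu> \<tau> 0"
    using integral_label_avg_x1_pos[OF assms(2,3)] t assms(1) by simp
  finally show "pop_hinge \<nu> \<tau> (t *\<^sub>R axis 1 1) < pop_hinge \<nu> \<tau> 0"
    by simp
  show "t *\<^sub>R axis 1 1 \<in> B1"
    using t by simp
qed

lemma tilted_axis_step_in_B1:
  assumes "0 < r" "r \<le> 1" "0 < s" "s \<le> 1" "0 < t" "t \<le> r * s"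
  shows "r *\<^sub>R axis 1 1 + t *\<^sub>R (- (s *\<^sub>R axis 1 1 + axis 2 1)) \<in> B1" (is "?v \<in> B1")
proof -
  have "?v $ 1 = r - t * s" "?v $ 2 = - t"
    by (simp_all add: axis_def algebra_simps)
  then have "norm ?v ^ 2 = (r - t * s)^2 + t^2"
    by (simp add: norm_point_sq)
  also have "\<dots> \<le> r^2"
  proof -
    have "t * t \<le> r * s * t"
      using assms by (simp add: mult_right_mono)
    moreover have "s * s * (t * t) \<le> t * t"
      using assms mult_right_mono[of "s * s" 1 "t * t"] by (simp add: mult_le_one)
    ultimately show ?thesis
      by (simp add: power2_eq_square algebra_simps)
  qed
  also have "\<dots> \<le> 1"
    using assms by (simp add: power_le_one)
  finally show ?thesis
    by (simp add: power_le_one_iff)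
qed

text \<open>At \<open>r *\<^sub>R axis 1 1\<close> the loss decreases when \<open>w\<close> is tilted towards \<open>- axis 2 1\<close>; the
  small component \<open>- s *\<^sub>R axis 1 1\<close> of the direction keeps the step inside the disk when
  \<open>r = 1\<close>, and is chosen so small that it does not spoil the negative correlation with \<open>x$2\<close>.\<close>

lemma integral_label_avg_tilt_pos:
  assumes "\<tau> > 0" "0 < \<nu>" "\<nu> \<le> 1" "0 < r"
  obtains s where "0 < s" "s \<le> 1" "(\<integral>x. label_avg \<nu> (\<lambda>x y. y * ((- (s *\<^sub>R axis 1 1 + axis 2 1)) \<bullet> x)
      * (if y * (r * x$1) < \<tau> then 1 else 0)) x \<partial>unifB1) > 0"
proof -
  define I where "I x y = (if y * (r * x$1) < \<tau> then 1 else (0::real))" for x :: point and y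
  define Q where "Q = (\<integral>x. label_avg \<nu> (\<lambda>x y. y * x$2 * I x y) x \<partial>unifB1)"
  define K1 where "K1 = (\<integral>x. label_avg \<nu> (\<lambda>x y. y * x$1 * I x y) x \<partial>unifB1)"
  have [measurable]: "(\<lambda>x. I x (noisy_label x b)) \<in> borel_measurable borel" for b
    unfolding I_def by measurable
  have int1: "integrable unifB1 (label_avg \<nu> (\<lambda>x y. y * x$1 * I x y))"
    and int2: "integrable unifB1 (label_avg \<nu> (\<lambda>x y. y * x$2 * I x y))"
    using assms B1_component_bound
    by (auto intro!: integrable_label_avg[where C=1] simp: abs_mult I_def)
  have "Q < 0"
    unfolding Q_def I_def using integral_label_avg_x2_neg[OF assms] by simp
  have "\<bar>K1\<bar> \<le> 1"
    unfolding K1_def using assms B1_component_bound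
    by (intro abs_integral_unifB1_le int1 abs_label_avg_le) (auto simp: abs_mult I_def)
  define s where "s = min 1 (-Q/2)"
  have s: "0 < s" "s \<le> 1" "s \<le> -Q/2"
    using \<open>Q < 0\<close> by (auto simp: s_def)
  have "s * K1 \<le> s"
    using \<open>\<bar>K1\<bar> \<le> 1\<close> s mult_left_mono[of K1 1 s] by simp
  moreover have "label_avg \<nu> (\<lambda>x y. y * ((- (s *\<^sub>R axis 1 1 + axis 2 1)) \<bullet> x) * I x y) x
      = -s * label_avg \<nu> (\<lambda>x y. y * x$1 * I x y) x - label_avg \<nu> (\<lambda>x y. y * x$2 * I x y) x" for x
    by (simp add: label_avg_def inner_axis' algebra_simps)
  then have "(\<integral>x. label_avg \<nu> (\<lambda>x y. y * ((- (s *\<^sub>R axis 1 1 + axis 2 1)) \<bullet> x) * I x y) x \<partial>unifB1)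
      = -s * K1 - Q"
    using int1 int2 by (simp add: K1_def Q_def)
  ultimately show ?thesis
    using that[of s] s \<open>Q < 0\<close> unfolding I_def by linarith
qed

lemma pop_hinge_descent_axis:
  assumes "\<tau> > 0" "0 < \<nu>" "\<nu> \<le> 1" "0 < r" "r \<le> 1"
  shows "\<exists>v\<in>B1. pop_hinge \<nu> \<tau> v < pop_hinge \<nu> \<tau> (r *\<^sub>R axis 1 1)"
proof -
  obtain s where s: "0 < s" "s \<le> 1" and "(\<integral>x. label_avg \<nu> (\<lambda>x y. y * ((- (s *\<^sub>R axis 1 1 + axis 2 1)) \<bullet> x)
      * (if y * (r * x$1) < \<tau> then 1 else 0)) x \<partial>unifB1) > 0" (is "?K > 0")
    using integral_label_avg_tilt_pos[OF assms(1-4)] by blast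
  define d :: point where "d = - (s *\<^sub>R axis 1 1 + axis 2 1)"
  define t where "t = min (r * s) (?K * r * pi / 128)"
  have t: "0 < t" "t \<le> r * s" "t \<le> ?K * r * pi / 128"
    using assms s \<open>?K > 0\<close> by (auto simp: t_def)
  have d_bounded: "\<bar>d \<bullet> x\<bar> \<le> 2" if "x \<in> B1" for x
  proof -
    have "\<bar>s * x$1\<bar> \<le> 1"
      using B1_component_bound[OF that, of 1] s by (simp add: abs_mult mult_le_one)
    moreover have "d \<bullet> x = - (s * x$1 + x$2)"
      by (simp add: d_def inner_diff_left inner_axis')
    ultimately show ?thesis
      using B1_component_bound[OF that, of 2] by linarith
  qed
  have step: "pop_hinge \<nu> \<tau> (r *\<^sub>R axis 1 1 + t *\<^sub>R d) \<le> pop_hinge \<nu> \<tau> (r *\<^sub>R axis 1 1)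
      - (t/\<tau>) * ?K + (2*t*2/\<tau>) * measure unifB1 {x. \<bar>\<bar>r * x$1\<bar> - \<tau>\<bar> \<le> t*2}"
    using pop_hinge_step_le[OF assms(1) t(1), of \<nu> d 2 "r *\<^sub>R axis 1 1"] assms d_bounded
    by (simp add: d_def inner_axis')
  have "(2*t*2/\<tau>) * measure unifB1 {x. \<bar>\<bar>r * x$1\<bar> - \<tau>\<bar> \<le> t*2} \<le> (2*t*2/\<tau>) * (8 * (t*2) / (r * pi))"
    using measure_unifB1_kink_band_le[OF assms(4), of "t*2" \<tau>] t assms(1)
    by (intro mult_left_mono) auto
  also have "\<dots> = (t/\<tau>) * (64 * t / (r * pi))"
    by (simp add: field_simps)
  also have "\<dots> \<le> (t/\<tau>) * (?K/2)"
    using t assms(1,4) by (intro mult_left_mono) (auto simp: pos_divide_le_eq)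
  moreover have "(t/\<tau>) * ?K > 0"
    using t(1) assms(1) \<open>?K > 0\<close> by simp
  moreover have "(t/\<tau>) * (?K/2) = (t/\<tau>) * ?K / 2"
    by simp
  ultimately have "pop_hinge \<nu> \<tau> (r *\<^sub>R axis 1 1 + t *\<^sub>R d) < pop_hinge \<nu> \<tau> (r *\<^sub>R axis 1 1)"
    using step by argo
  moreover have "r *\<^sub>R axis 1 1 + t *\<^sub>R d \<in> B1"
    unfolding d_def using assms s t by (intro tilted_axis_step_in_B1) auto
  ultimately show ?thesis
    by blast
qed

section \<open>Excess error and the minimizers of the population loss\<close>

text \<open>A continuous lower bound for the mass of \<open>{x. x$1 > 0 \<and> w \<bullet> x < 0}\<close>, the region where
  \<open>h w\<close> disagrees with the Bayes classifier \<open>h (axis 1 1)\<close>.\<close>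

definition wrong_side_weight :: "point \<Rightarrow> point \<Rightarrow> real" where
  "wrong_side_weight w x = min 1 (max 0 (x$1)) * min 1 (max 0 (-(w \<bullet> x)))"

definition wrong_side_mass :: "point \<Rightarrow> real" where
  "wrong_side_mass w = (\<integral>x. wrong_side_weight w x \<partial>unifB1)"

lemma wrong_side_weight_measurable [measurable]: "wrong_side_weight w \<in> borel_measurable borel"
  unfolding wrong_side_weight_def by measurable

lemma wrong_side_weight_bounds: "0 \<le> wrong_side_weight w x" "wrong_side_weight w x \<le> 1"
  unfolding wrong_side_weight_def by (auto intro: mult_le_one)

lemma integrable_wrong_side_weight: "integrable unifB1 (wrong_side_weight w)"
  using wrong_side_weight_bounds by (intro integrable_unifB1[where C=1]) auto

lemma wrong_side_weight_lipschitz: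
  assumes "x \<in> B1"
  shows "\<bar>wrong_side_weight w x - wrong_side_weight v x\<bar> \<le> norm (w - v)"
proof -
  define a where "a = min 1 (max 0 (x$1))"
  define m where "m u = min 1 (max 0 (-(u \<bullet> x)))" for u
  have "\<bar>m w - m v\<bar> \<le> \<bar>(w - v) \<bullet> x\<bar>"
    unfolding m_def inner_diff_left by (simp add: min_def max_def abs_minus_commute)
  also have "\<dots> \<le> norm (w - v)"
    by (rule B1_inner_bound[OF assms])
  finally have "\<bar>m w - m v\<bar> \<le> norm (w - v)" .
  moreover have "0 \<le> a" "a \<le> 1"
    by (auto simp: a_def)
  ultimately have "a * \<bar>m w - m v\<bar> \<le> norm (w - v)"
    by (meson mult_left_le_one_le abs_ge_zero order_trans)
  then show ?thesis
    unfolding wrong_side_weight_def a_def[symmetric] m_def[symmetric] using \<open>0 \<le> a\<close>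
    by (simp add: abs_mult right_diff_distrib[symmetric])
qed

lemma continuous_on_wrong_side_mass: "continuous_on UNIV wrong_side_mass"
proof (rule lipschitz_on_continuous_on)
  show "1-lipschitz_on UNIV wrong_side_mass"
  proof (rule lipschitz_onI)
    fix w v :: point
    have "wrong_side_mass w - wrong_side_mass v = (\<integral>x. wrong_side_weight w x - wrong_side_weight v x \<partial>unifB1)"
      unfolding wrong_side_mass_def using integrable_wrong_side_weight by simp
    also have "\<bar>\<dots>\<bar> \<le> norm (w - v)"
      using integrable_wrong_side_weight wrong_side_weight_lipschitz
      by (intro abs_integral_unifB1_le) auto
    finally show "dist (wrong_side_mass w) (wrong_side_mass v) \<le> 1 * dist w v"
      by (simp add: dist_norm dist_real_def)
  qed simp
qed

text \<open>If \<open>w\<close> is not a nonnegative multiple of \<open>axis 1 1\<close>, the point \<open>(axis 1 1 - w /\<^sub>R norm w) / 4\<close>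
  lies strictly inside the wrong-side region.\<close>

lemma wrong_side_mass_pos:
  assumes "w$1 < norm w"
  shows "wrong_side_mass w > 0"
proof -
  define p where "p = (1/4) *\<^sub>R (axis 1 1 - (1 / norm w) *\<^sub>R w)"
  have "w \<noteq> 0"
    using assms by auto
  then have "norm p \<le> (1/4) * (1 + 1)"
    unfolding p_def using norm_triangle_ineq4[of "axis 1 1" "(1 / norm w) *\<^sub>R w"] by simp
  moreover have "p$1 > 0"
    using assms \<open>w \<noteq> 0\<close> by (simp add: p_def axis_def field_simps)
  moreover have "w \<bullet> p < 0"
    using assms \<open>w \<noteq> 0\<close>
    by (simp add: p_def inner_diff_right inner_axis field_simps dot_square_norm power2_eq_square)
  ultimately show ?thesis
    unfolding wrong_side_mass_def using wrong_side_weight_bounds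
    by (intro integral_unifB1_pos[where C=1 and g="wrong_side_weight w" and p=p])
       (auto simp: wrong_side_weight_def intro!: continuous_intros)
qed

lemma h_measurable [measurable]: "(\<lambda>x. h w x) \<in> borel_measurable borel"
  unfolding h_def by measurable

lemma err_D_noisy:
  assumes "0 \<le> \<nu>" "\<nu> \<le> 1"
  shows "err (D_noisy \<nu>) w = (\<integral>x. label_avg \<nu> (\<lambda>x y. of_bool (h w x \<noteq> y)) x \<partial>unifB1)"
proof -
  have "{p \<in> space (borel \<Otimes>\<^sub>M borel). h w (fst p) \<noteq> (snd p :: real)} \<in> sets (borel \<Otimes>\<^sub>M borel)"
    by measurable
  then have [measurable]: "{p :: point \<times> real. h w (fst p) \<noteq> snd p} \<in> sets (borel \<Otimes>\<^sub>M borel)"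
    by (simp add: space_pair_measure)
  have "err (D_noisy \<nu>) w = integral\<^sup>L (D_noisy \<nu>) (indicator {p. h w (fst p) \<noteq> snd p})"
    unfolding err_def by simp
  also have "\<dots> = (\<integral>x. label_avg \<nu> (\<lambda>x y. indicator {p. h w (fst p) \<noteq> snd p} (x, y)) x \<partial>unifB1)"
    using assms by (intro integral_D_noisy[where C=1]) auto
  finally show ?thesis
    by (simp add: indicator_def of_bool_def)
qed

lemma label_avg_error_excess_ge:
  assumes "0 < \<nu>" "\<nu> < 1/2" "x$1 \<noteq> 0"
  shows "(1 - 2*\<nu>) * wrong_side_weight w x
    \<le> label_avg \<nu> (\<lambda>x y. of_bool (h w x \<noteq> y)) x - label_avg \<nu> (\<lambda>x y. of_bool (h (axis 1 1) x \<noteq> y)) x"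
proof (cases "x$1 > 0")
  case True
  then have "label_avg \<nu> (\<lambda>x y. of_bool (h (axis 1 1) x \<noteq> y)) x = \<nu> * of_bool (x$2 > 0)"
    by (simp add: label_avg_def noisy_label_def h_def inner_axis')
  moreover consider "w \<bullet> x < 0" | "w \<bullet> x \<ge> 0"
    by linarith
  then have "(1 - 2*\<nu>) * wrong_side_weight w x + \<nu> * of_bool (x$2 > 0)
      \<le> label_avg \<nu> (\<lambda>x y. of_bool (h w x \<noteq> y)) x"
  proof cases
    case 1
    then have "label_avg \<nu> (\<lambda>x y. of_bool (h w x \<noteq> y)) x \<ge> 1 - \<nu>"
      using True assms by (auto simp: label_avg_def noisy_label_def h_def)
    moreover have "(1 - 2*\<nu>) * wrong_side_weight w x \<le> (1 - 2*\<nu>) * 1"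
      using assms wrong_side_weight_bounds[of w x] by (intro mult_left_mono) auto
    moreover have "\<nu> * of_bool (x$2 > 0) \<le> \<nu>"
      using assms by simp
    ultimately show ?thesis
      by argo
  next
    case 2
    then have "wrong_side_weight w x = 0"
      by (simp add: wrong_side_weight_def)
    moreover have "\<nu> * of_bool (x$2 > 0) \<le> label_avg \<nu> (\<lambda>x y. of_bool (h w x \<noteq> y)) x"
      using True 2 assms by (cases "w \<bullet> x = 0") (auto simp: label_avg_def noisy_label_def h_def)
    ultimately show ?thesis
      by simp
  qed
  ultimately show ?thesis
    by simp
next
  case False
  then have "wrong_side_weight w x = 0" "label_avg \<nu> (\<lambda>x y. of_bool (h (axis 1 1) x \<noteq> y)) x = 0"
    using assms(3) by (auto simp: wrong_side_weight_def label_avg_def noisy_label_def h_def inner_axis')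
  moreover have "label_avg \<nu> (\<lambda>x y. of_bool (h w x \<noteq> y)) x \<ge> 0"
    using assms by (simp add: label_avg_def)
  ultimately show ?thesis
    by simp
qed

lemma excess_error_ge_wrong_side_mass:
  assumes "0 < \<nu>" "\<nu> < 1/2"
  shows "err (D_noisy \<nu>) w - err (D_noisy \<nu>) (axis 1 1) \<ge> (1 - 2*\<nu>) * wrong_side_mass w"
proof -
  have int_err: "integrable unifB1 (label_avg \<nu> (\<lambda>x y. of_bool (h u x \<noteq> y)))" for u
    using assms by (intro integrable_label_avg[where C=1]) auto
  have "(1 - 2*\<nu>) * wrong_side_mass w = (\<integral>x. (1 - 2*\<nu>) * wrong_side_weight w x \<partial>unifB1)"
    unfolding wrong_side_mass_def by simp
  also have "\<dots> \<le> (\<integral>x. label_avg \<nu> (\<lambda>x y. of_bool (h w x \<noteq> y)) x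
      - label_avg \<nu> (\<lambda>x y. of_bool (h (axis 1 1) x \<noteq> y)) x \<partial>unifB1)"
  proof (rule integral_mono_AE)
    show "AE x in unifB1. (1 - 2*\<nu>) * wrong_side_weight w x \<le> label_avg \<nu> (\<lambda>x y. of_bool (h w x \<noteq> y)) x
        - label_avg \<nu> (\<lambda>x y. of_bool (h (axis 1 1) x \<noteq> y)) x"
      using AE_unifB1_nth_1_neq_0 by eventually_elim (rule label_avg_error_excess_ge[OF assms])
  qed (use integrable_wrong_side_weight int_err in auto)
  also have "\<dots> = err (D_noisy \<nu>) w - err (D_noisy \<nu>) (axis 1 1)"
    using int_err assms by (simp add: err_D_noisy)
  finally show ?thesis .
qed

lemma pop_hinge_minimizer_wrong_side_pos:
  assumes "\<tau> > 0" "0 < \<nu>" "\<nu> < 1/2"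
    and "w \<in> B1" and min: "\<forall>v\<in>B1. pop_hinge \<nu> \<tau> w \<le> pop_hinge \<nu> \<tau> v"
  shows "wrong_side_mass w > 0"
proof (rule wrong_side_mass_pos)
  have "w$1 \<le> norm w"
    using component_le_norm_cart[of w 1] by simp
  moreover have "w$1 \<noteq> norm w"
  proof
    assume "w$1 = norm w"
    then have w: "w = norm w *\<^sub>R axis 1 1"
      by (rule point_eq_axis_if_nth_1_eq_norm)
    have "\<exists>v\<in>B1. pop_hinge \<nu> \<tau> v < pop_hinge \<nu> \<tau> w"
    proof (cases "norm w = 0")
      case True
      then have "w = 0"
        by simp
      then show ?thesis
        using pop_hinge_descent_zero[of \<tau> \<nu>] assms by simp
    next
      case False
      then have "\<nu> \<le> 1" "0 < norm w" "norm w \<le> 1"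
        using assms(3,4) by auto
      from pop_hinge_descent_axis[OF assms(1,2) this] show ?thesis
        by (metis w)
    qed
    then show False
      using min by (meson not_le)
  qed
  ultimately show "w$1 < norm w"
    by simp
qed

lemma compact_minimum_gap:
  fixes f g :: "'a::topological_space \<Rightarrow> real"
  assumes "compact K" "continuous_on UNIV f" "continuous_on UNIV g"
    and "w0 \<in> K" "\<forall>v\<in>K. f w0 \<le> f v" and pos: "\<forall>w\<in>K. f w = f w0 \<longrightarrow> g w > 0"
  shows "\<exists>\<psi>>0. \<exists>\<gamma>>0. \<forall>w\<in>K. g w \<le> \<psi> \<longrightarrow> f w0 + \<gamma> \<le> f w"
proof -
  define M where "M = K \<inter> {w. f w = f w0}"
  have "compact M" "M \<noteq> {}"
    using assms(1,2,4) unfolding M_def by (auto intro!: compact_Int_closed closed_Collect_eq continuous_on_const)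
  then obtain wm where "wm \<in> M" and wm: "\<forall>w\<in>M. g wm \<le> g w"
    using continuous_attains_inf[OF _ _ continuous_on_subset[OF assms(3)]] by blast
  define \<psi> where "\<psi> = g wm / 2"
  have "\<psi> > 0"
    using pos \<open>wm \<in> M\<close> by (simp add: \<psi>_def M_def)
  define L where "L = K \<inter> {w. g w \<le> \<psi>}"
  have "compact L"
    using assms(1,3) unfolding L_def by (auto intro!: compact_Int_closed closed_Collect_le continuous_on_const)
  show ?thesis
  proof (cases "L = {}")
    case True
    then show ?thesis
      using \<open>\<psi> > 0\<close> by (intro exI[of _ \<psi>] exI[of _ 1]) (auto simp: L_def)
  next
    case False
    then obtain wl where "wl \<in> L" and wl: "\<forall>w\<in>L. f wl \<le> f w"
      using continuous_attains_inf[OF \<open>compact L\<close> _ continuous_on_subset[OF assms(2)]] by blast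
    have "wl \<notin> M"
      using wm \<open>wl \<in> L\<close> \<open>\<psi> > 0\<close> by (force simp: L_def \<psi>_def)
    then have "f wl > f w0"
      using assms(5) \<open>wl \<in> L\<close> by (force simp: M_def L_def)
    then show ?thesis
      using \<open>\<psi> > 0\<close> wl by (intro exI[of _ \<psi>] conjI exI[of _ "f wl - f w0"]) (auto simp: L_def)
  qed
qed

lemma pop_hinge_gap:
  assumes "\<tau> > 0" "0 < \<nu>" "\<nu> < 1/2"
  obtains w0 \<psi> \<gamma> where "w0 \<in> B1" "\<forall>v\<in>B1. pop_hinge \<nu> \<tau> w0 \<le> pop_hinge \<nu> \<tau> v" "\<psi> > 0" "\<gamma> > 0"
    "\<forall>w\<in>B1. wrong_side_mass w \<le> \<psi> \<longrightarrow> pop_hinge \<nu> \<tau> w0 + \<gamma> \<le> pop_hinge \<nu> \<tau> w"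
proof -
  have cont: "continuous_on UNIV (pop_hinge \<nu> \<tau>)"
    using continuous_on_pop_hinge assms by simp
  have "B1 \<noteq> {}"
    by (metis centre_in_cball zero_le_one empty_iff)
  then obtain w0 where "w0 \<in> B1" and min: "\<forall>v\<in>B1. pop_hinge \<nu> \<tau> w0 \<le> pop_hinge \<nu> \<tau> v"
    using continuous_attains_inf[OF compact_cball _ continuous_on_subset[OF cont subset_UNIV]] by blast
  moreover have "\<forall>w\<in>B1. pop_hinge \<nu> \<tau> w = pop_hinge \<nu> \<tau> w0 \<longrightarrow> wrong_side_mass w > 0"
    using pop_hinge_minimizer_wrong_side_pos[OF assms] min by (metis order_refl)
  ultimately show ?thesis
    using compact_minimum_gap[OF compact_cball cont continuous_on_wrong_side_mass] that by blast
qed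

section \<open>Samples and uniform convergence of the empirical hinge loss\<close>

lemma indep_vars_PiM_components:
  fixes I :: "'i set"
  assumes "prob_space M" "finite I" "I \<noteq> {}"
  shows "prob_space.indep_vars (PiM I (\<lambda>_. M)) (\<lambda>_. M) (\<lambda>i S. S i) I"
proof -
  interpret P: prob_space "PiM I (\<lambda>_. M)"
    using assms by (intro prob_space_PiM) auto
  have "distr (PiM I (\<lambda>_. M)) (PiM I (\<lambda>_. M)) (\<lambda>S. restrict (\<lambda>i. S i) I) = PiM I (\<lambda>_. M)"
    by (subst distr_cong[where g="\<lambda>S. S"]) (auto simp: space_PiM PiE_iff extensional_restrict)
  also have "\<dots> = PiM I (\<lambda>i. distr (PiM I (\<lambda>_. M)) M (\<lambda>S. S i))"
    using assms by (intro PiM_cong refl distr_PiM_component[symmetric]) auto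
  finally show ?thesis
    using assms(3) by (subst P.indep_vars_iff_distr_eq_PiM') auto
qed

lemma Hoeffding_PiM_mean:
  fixes g :: "'a \<Rightarrow> real" and n :: nat and a b \<epsilon> :: real
  assumes "prob_space M" and [measurable]: "g \<in> borel_measurable M"
    and "AE x in M. g x \<in> {a..b}" "a < b" "n > 0" "\<epsilon> \<ge> 0"
  shows "measure (PiM {..<n} (\<lambda>_. M))
      {S \<in> space (PiM {..<n} (\<lambda>_. M)). \<bar>(\<Sum>i<n. g (S i)) / n - (\<integral>x. g x \<partial>M)\<bar> \<ge> \<epsilon>}
    \<le> 2 * exp (-2 * n * \<epsilon>\<^sup>2 / (b - a)\<^sup>2)"
proof -
  let ?P = "PiM {..<n} (\<lambda>_. M)"
  interpret P: prob_space ?P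
    using assms(1) by (intro prob_space_PiM) auto
  have comp: "(\<lambda>S. S i) \<in> ?P \<rightarrow>\<^sub>M M" if "i < n" for i
    using that by (intro measurable_component_singleton) auto
  have distr_comp: "distr ?P M (\<lambda>S. S i) = M" if "i < n" for i
    using that assms(1) by (intro distr_PiM_component) auto
  have distr_g: "distr ?P borel (\<lambda>S. g (S i)) = distr M borel g" if "i < n" for i
    using distr_distr[OF _ comp[OF that], of g borel] that by (simp add: o_def distr_comp)
  interpret H: Hoeffding_ineq_iid ?P "{..<n}" "\<lambda>i S. g (S i)" "\<lambda>S. g (S 0)" a b "\<integral>x. g x \<partial>M"
  proof unfold_locales
    have "P.indep_vars (\<lambda>_. M) (\<lambda>i S. S i) {..<n}"
      using assms(1,5) by (intro indep_vars_PiM_components) auto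
    then show "P.indep_vars (\<lambda>_. borel) (\<lambda>i S. g (S i)) {..<n}"
      using P.indep_vars_compose2[where Y="\<lambda>_. g" and N="\<lambda>_. borel"] assms(2) by blast
    show "distr ?P borel (\<lambda>S. g (S i)) = distr ?P borel (\<lambda>S. g (S 0))" if "i \<in> {..<n}" for i
      using that assms(5) by (simp add: distr_g)
    show "(\<lambda>S. g (S 0)) \<in> borel_measurable ?P"
      using measurable_compose[OF comp assms(2)] assms(5) by simp
    show "AE S in ?P. g (S 0) \<in> {a..b}"
      using assms(3,5) by (intro AE_PiM_component[OF assms(1), where P="\<lambda>x. g x \<in> {a..b}"]) auto
    show "(\<integral>x. g x \<partial>M) \<equiv> P.expectation (\<lambda>S. g (S 0))"
      using integral_distr[OF comp, of 0 g] assms(5) by (simp add: distr_comp)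
  qed simp
  show ?thesis
  proof -
    have "{..<n} \<noteq> {}"
      using assms(5) by auto
    from H.Hoeffding_ineq_abs_ge'[OF assms(6,4) this] show ?thesis
      by simp
  qed
qed

abbreviation sample_space :: "real \<Rightarrow> nat \<Rightarrow> (nat \<Rightarrow> point \<times> real) measure" where
  "sample_space \<nu> n \<equiv> PiM {..<n} (\<lambda>_. D_noisy \<nu>)"

lemma emp_hinge_measurable [measurable]: "(\<lambda>S. emp_hinge \<tau> n S w) \<in> borel_measurable (sample_space \<nu> n)"
proof -
  have "(\<lambda>p. hinge \<tau> w (fst p) (snd p)) \<in> borel_measurable (D_noisy \<nu>)"
    by measurable
  then have "(\<lambda>S. hinge \<tau> w (fst (S i)) (snd (S i))) \<in> borel_measurable (sample_space \<nu> n)" if "i < n" for i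
    using measurable_compose[OF measurable_component_singleton] that by fastforce
  then show ?thesis
    unfolding emp_hinge_def by (intro borel_measurable_divide borel_measurable_sum) auto
qed

lemma emp_hinge_lipschitz:
  assumes "\<tau> > 0" "\<forall>i<n. fst (S i) \<in> B1 \<and> snd (S i) \<in> {-1,1}"
  shows "\<bar>emp_hinge \<tau> n S w - emp_hinge \<tau> n S v\<bar> \<le> norm (w - v) / \<tau>"
proof -
  have "\<bar>emp_hinge \<tau> n S w - emp_hinge \<tau> n S v\<bar>
      = \<bar>\<Sum>i<n. hinge \<tau> w (fst (S i)) (snd (S i)) - hinge \<tau> v (fst (S i)) (snd (S i))\<bar> / real n"
    unfolding emp_hinge_def by (simp add: sum_subtractf diff_divide_distrib[symmetric])
  also have "\<dots> \<le> (\<Sum>i<n. norm (w - v) / \<tau>) / real n"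
    using assms hinge_lipschitz[OF assms(1)]
    by (intro divide_right_mono order_trans[OF sum_abs] sum_mono) auto
  also have "\<dots> \<le> norm (w - v) / \<tau>"
    using assms(1) by simp
  finally show ?thesis .
qed

lemma emp_hinge_approx_near:
  assumes "\<tau> > 0" "0 \<le> \<nu>" "\<nu> \<le> 1" "\<forall>i<n. fst (S i) \<in> B1 \<and> snd (S i) \<in> {-1,1}"
    and "\<bar>emp_hinge \<tau> n S u - pop_hinge \<nu> \<tau> u\<bar> < \<gamma>/2" "norm (w - u) < \<gamma> * \<tau> / 4"
  shows "\<bar>emp_hinge \<tau> n S w - pop_hinge \<nu> \<tau> w\<bar> < \<gamma>"
proof -
  have "norm (w - u) / \<tau> < \<gamma>/4"
    using assms(1,6) by (simp add: field_simps)
  moreover have "\<bar>emp_hinge \<tau> n S w - emp_hinge \<tau> n S u\<bar> \<le> norm (w - u) / \<tau>"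
    using assms(1,4) by (rule emp_hinge_lipschitz)
  moreover have "\<bar>pop_hinge \<nu> \<tau> u - pop_hinge \<nu> \<tau> w\<bar> \<le> norm (w - u) / \<tau>"
    using pop_hinge_lipschitz[OF assms(1-3), of u w] by (simp add: norm_minus_commute)
  ultimately show ?thesis
    using assms(5) by linarith
qed

lemma emp_hinge_deviation_prob_le:
  assumes "\<tau> > 0" "0 \<le> \<nu>" "\<nu> \<le> 1" "w \<in> B1" "n > 0" "\<epsilon> \<ge> 0"
  shows "measure (sample_space \<nu> n) {S \<in> space (sample_space \<nu> n). \<bar>emp_hinge \<tau> n S w - pop_hinge \<nu> \<tau> w\<bar> \<ge> \<epsilon>}
    \<le> 2 * exp (-2 * n * \<epsilon>\<^sup>2 / (1 + 1/\<tau>)\<^sup>2)"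
proof -
  have "norm w / \<tau> \<le> 1 / \<tau>"
    using assms(1,4) by (simp add: divide_right_mono)
  have "AE p in D_noisy \<nu>. hinge \<tau> w (fst p) (snd p) \<in> {0..1 + 1/\<tau>}"
    using AE_D_noisy
  proof eventually_elim
    case (elim p)
    then show ?case
      using hinge_bounded[OF assms(1), of "fst p" "snd p" w] hinge_nonneg \<open>norm w / \<tau> \<le> 1 / \<tau>\<close>
      by auto
  qed
  moreover have "1 + 1/\<tau> > 0"
    using assms(1) by (simp add: add_pos_pos)
  moreover have "(\<lambda>p. hinge \<tau> w (fst p) (snd p)) \<in> borel_measurable (D_noisy \<nu>)"
    by measurable
  ultimately show ?thesis
    using Hoeffding_PiM_mean[OF prob_space_D_noisy, of "\<lambda>p. hinge \<tau> w (fst p) (snd p)" \<nu> 0 "1 + 1/\<tau>" n \<epsilon>]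
      assms integral_D_noisy_hinge[OF assms(1-3)]
    by (simp add: emp_hinge_def)
qed

lemma AE_sample_space_support:
  "AE S in sample_space \<nu> n. \<forall>i<n. fst (S i) \<in> B1 \<and> snd (S i) \<in> {-1, 1}"
proof -
  have "AE S in sample_space \<nu> n. \<forall>i\<in>{..<n}. fst (S i) \<in> B1 \<and> snd (S i) \<in> {-1, 1}"
  proof (rule AE_finite_allI)
    fix i assume "i \<in> {..<n}"
    from AE_PiM_component[where M="\<lambda>_. D_noisy \<nu>" and P="\<lambda>p. fst p \<in> B1 \<and> snd p \<in> {-1, 1}",
        OF prob_space_D_noisy this AE_D_noisy]
    show "AE S in sample_space \<nu> n. fst (S i) \<in> B1 \<and> snd (S i) \<in> {-1, 1}"
      by simp
  qed simp
  then show ?thesis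
    by (auto elim: eventually_mono)
qed

lemma exp_neg_le_inverse:
  assumes "(z::real) > 0"
  shows "exp (- z) \<le> 1 / z"
proof -
  have "z \<le> exp z"
    using exp_ge_add_one_self[of z] by linarith
  then have "1 / exp z \<le> 1 / z"
    using assms by (intro divide_left_mono) auto
  then show ?thesis
    by (simp add: exp_minus inverse_eq_divide)
qed

text \<open>Hoeffding's inequality on a finite \<open>\<rho>\<close>-net of \<open>B1\<close>, transferred to all of \<open>B1\<close> by the
  \<open>1/\<tau>\<close>-Lipschitz bounds.\<close>

lemma emp_hinge_uniform_approx:
  assumes "\<tau> > 0" "0 \<le> \<nu>" "\<nu> \<le> 1" "\<gamma> > 0" "\<delta> > 0"
  shows "\<exists>m. \<forall>n\<ge>m. \<exists>E\<in>sets (sample_space \<nu> n). measure (sample_space \<nu> n) E \<ge> 1 - \<delta> \<and>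
     (\<forall>S\<in>E. \<forall>w\<in>B1. \<bar>emp_hinge \<tau> n S w - pop_hinge \<nu> \<tau> w\<bar> < \<gamma>)"
proof -
  define \<rho> where "\<rho> = \<gamma> * \<tau> / 4"
  have "\<rho> > 0"
    using assms by (simp add: \<rho>_def)
  then obtain N where N: "finite N" "N \<subseteq> B1" "B1 \<subseteq> (\<Union>u\<in>N. ball u \<rho>)"
    using seq_compact_imp_totally_bounded[OF compact_imp_seq_compact[OF compact_cball]] by metis
  define c where "c = 2 * (\<gamma>/2)\<^sup>2 / (1 + 1/\<tau>)\<^sup>2"
  have "1 + 1/\<tau> > 0"
    using assms(1) by (simp add: add_pos_pos)
  then have "c > 0"
    using assms(4) by (simp add: c_def)
  define m where "m = nat \<lceil>2 * card N / (c * \<delta>)\<rceil> + 1"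
  show ?thesis
  proof (intro exI[of _ m] allI impI)
    fix n assume "m \<le> n"
    then have "n > 0" and n_large: "2 * card N / (c * \<delta>) \<le> n"
      unfolding m_def by linarith+
    let ?P = "sample_space \<nu> n"
    interpret P: prob_space ?P
      by (intro prob_space_PiM prob_space_D_noisy)
    define Bad where "Bad u = {S \<in> space ?P. \<bar>emp_hinge \<tau> n S u - pop_hinge \<nu> \<tau> u\<bar> \<ge> \<gamma>/2}" for u
    define E where "E = {S \<in> space ?P. (\<forall>i<n. fst (S i) \<in> B1 \<and> snd (S i) \<in> {-1, 1})
      \<and> (\<forall>u\<in>N. \<bar>emp_hinge \<tau> n S u - pop_hinge \<nu> \<tau> u\<bar> < \<gamma>/2)}"
    have Bad_sets [measurable]: "Bad u \<in> sets ?P" for u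
      unfolding Bad_def by measurable
    have E_sets: "E \<in> sets ?P"
      unfolding E_def using N(1) by measurable
    have "P.prob (space ?P - E) \<le> P.prob (\<Union>u\<in>N. Bad u)"
    proof (rule P.finite_measure_mono_AE)
      show "AE S in ?P. S \<in> space ?P - E \<longrightarrow> S \<in> (\<Union>u\<in>N. Bad u)"
        using AE_sample_space_support by eventually_elim (force simp: E_def Bad_def not_less)
    qed (use N(1) in auto)
    also have "\<dots> \<le> (\<Sum>u\<in>N. P.prob (Bad u))"
      using N(1) by (intro P.finite_measure_subadditive_finite) auto
    also have "\<dots> \<le> (\<Sum>u\<in>N. 2 * exp (- (c * n)))"
    proof (rule sum_mono)
      fix u assume "u \<in> N"
      then have "u \<in> B1"
        using N(2) by blast
      moreover have "-2 * n * (\<gamma>/2)\<^sup>2 / (1 + 1/\<tau>)\<^sup>2 = - (c * n)"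
        by (simp add: c_def)
      ultimately show "P.prob (Bad u) \<le> 2 * exp (- (c * n))"
        using emp_hinge_deviation_prob_le[OF assms(1-3), of u n "\<gamma>/2"] \<open>n > 0\<close> assms(4)
        unfolding Bad_def by simp
    qed
    also have "\<dots> = card N * (2 * exp (- (c * n)))"
      by simp
    also have "\<dots> \<le> card N * (2 * (1 / (c * n)))"
      using exp_neg_le_inverse[of "c * n"] \<open>c > 0\<close> \<open>n > 0\<close> by (intro mult_left_mono) auto
    also have "\<dots> \<le> \<delta>"
      using n_large \<open>c > 0\<close> \<open>n > 0\<close> assms(5) by (simp add: field_simps)
    finally have "P.prob E \<ge> 1 - \<delta>"
      using P.prob_compl[OF E_sets] by simp
    moreover have "\<bar>emp_hinge \<tau> n S w - pop_hinge \<nu> \<tau> w\<bar> < \<gamma>" if "S \<in> E" "w \<in> B1" for S w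
    proof -
      obtain u where "u \<in> N" "dist u w < \<rho>"
        using N(3) \<open>w \<in> B1\<close> by auto
      with \<open>S \<in> E\<close> show ?thesis
        using emp_hinge_approx_near[OF assms(1-3), of n S u \<gamma> w]
        by (auto simp: E_def \<rho>_def dist_norm norm_minus_commute)
    qed
    ultimately show "\<exists>E\<in>sets ?P. P.prob E \<ge> 1 - \<delta> \<and>
        (\<forall>S\<in>E. \<forall>w\<in>B1. \<bar>emp_hinge \<tau> n S w - pop_hinge \<nu> \<tau> w\<bar> < \<gamma>)"
      using E_sets by blast
  qed
qed

lemma hinge_minimizer_pop_hinge_lt:
  assumes "\<forall>w\<in>B1. \<bar>emp_hinge \<tau> n S w - pop_hinge \<nu> \<tau> w\<bar> < \<gamma>/2" "w0 \<in> B1"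
    and "hinge_minimizer \<tau> n S w"
  shows "pop_hinge \<nu> \<tau> w < pop_hinge \<nu> \<tau> w0 + \<gamma>"
proof -
  have "w \<in> B1" "emp_hinge \<tau> n S w \<le> emp_hinge \<tau> n S w0"
    using assms(2,3) unfolding hinge_minimizer_def by auto
  moreover from this(1) assms(1,2)
  have "\<bar>emp_hinge \<tau> n S w - pop_hinge \<nu> \<tau> w\<bar> < \<gamma>/2" "\<bar>emp_hinge \<tau> n S w0 - pop_hinge \<nu> \<tau> w0\<bar> < \<gamma>/2"
    by blast+
  ultimately show ?thesis
    by linarith
qed

lemma hinge_minimizer_excess_error:
  assumes "\<tau> > 0" "0 < \<nu>" "\<nu> < 1/2"
  shows "\<exists>\<epsilon>>0. \<forall>\<delta>>0. \<exists>m. \<forall>n\<ge>m. \<exists>E\<in>sets (sample_space \<nu> n).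
    measure (sample_space \<nu> n) E \<ge> 1 - \<delta> \<and>
    (\<forall>S\<in>E. \<forall>w. hinge_minimizer \<tau> n S w \<longrightarrow> err (D_noisy \<nu>) w - err (D_noisy \<nu>) (axis 1 1) > \<epsilon>)"
proof -
  obtain w0 \<psi> \<gamma> where "w0 \<in> B1" "\<psi> > 0" "\<gamma> > 0"
    and gap: "\<forall>w\<in>B1. wrong_side_mass w \<le> \<psi> \<longrightarrow> pop_hinge \<nu> \<tau> w0 + \<gamma> \<le> pop_hinge \<nu> \<tau> w"
    using pop_hinge_gap[OF assms] by metis
  have excess: "err (D_noisy \<nu>) w - err (D_noisy \<nu>) (axis 1 1) > (1 - 2*\<nu>) * \<psi>"
    if "w \<in> B1" "pop_hinge \<nu> \<tau> w < pop_hinge \<nu> \<tau> w0 + \<gamma>" for w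
  proof -
    have "wrong_side_mass w > \<psi>"
      using gap that by force
    then have "(1 - 2*\<nu>) * \<psi> < (1 - 2*\<nu>) * wrong_side_mass w"
      using assms(3) by simp
    then show ?thesis
      using excess_error_ge_wrong_side_mass[OF assms(2,3), of w] by linarith
  qed
  have "\<exists>m. \<forall>n\<ge>m. \<exists>E\<in>sets (sample_space \<nu> n). measure (sample_space \<nu> n) E \<ge> 1 - \<delta> \<and>
      (\<forall>S\<in>E. \<forall>w. hinge_minimizer \<tau> n S w \<longrightarrow> err (D_noisy \<nu>) w - err (D_noisy \<nu>) (axis 1 1) > (1 - 2*\<nu>) * \<psi>)"
    if "\<delta> > 0" for \<delta>
  proof -
    obtain m where m: "\<forall>n\<ge>m. \<exists>E\<in>sets (sample_space \<nu> n). measure (sample_space \<nu> n) E \<ge> 1 - \<delta> \<and>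
        (\<forall>S\<in>E. \<forall>w\<in>B1. \<bar>emp_hinge \<tau> n S w - pop_hinge \<nu> \<tau> w\<bar> < \<gamma>/2)"
      using emp_hinge_uniform_approx[of \<tau> \<nu> "\<gamma>/2" \<delta>] assms \<open>\<gamma> > 0\<close> \<open>\<delta> > 0\<close> by auto
    then show ?thesis
      using excess hinge_minimizer_pop_hinge_lt[OF _ \<open>w0 \<in> B1\<close>] unfolding hinge_minimizer_def
      by (metis (no_types, lifting))
  qed
  moreover have "(1 - 2*\<nu>) * \<psi> > 0"
    using assms(3) \<open>\<psi> > 0\<close> by simp
  ultimately show ?thesis
    by blast
qed

lemma eta_margin:
  assumes "\<beta> < 1"
  shows "\<bar>eta ((1 - \<beta>) / 4) x - (1 - eta ((1 - \<beta>) / 4) x)\<bar> \<ge> \<beta>"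
  using assms by (auto simp: eta_def field_simps)

lemma eta_agrees_with_axis_1:
  assumes "\<nu> \<le> 1/2"
  shows "(2 * eta \<nu> x - 1) * (axis 1 1 \<bullet> x) \<ge> 0"
  using assms by (auto simp: eta_def inner_axis' mult_nonneg_nonneg mult_nonpos_nonpos)

theorem theorem6:
  fixes \<tau> \<beta> :: real
  assumes "\<tau> > 0" and "0 \<le> \<beta>" and "\<beta> < 1"
  shows "\<exists>(D :: (point \<times> real) measure) (\<eta> :: point \<Rightarrow> real) (wstar :: point).
    prob_space D \<and> sets D = sets (borel \<Otimes>\<^sub>M borel) \<and>
    (AE p in D. fst p \<in> B1 \<and> snd p \<in> {-1, 1}) \<and>
    distr D borel fst = unifB1 \<and>
    \<eta> \<in> borel_measurable borel \<and>
    (\<forall>x. 0 \<le> \<eta> x \<and> \<eta> x \<le> 1) \<and>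
    (\<forall>A\<in>sets borel. measure D (A \<times> {1}) = (\<integral>x. indicator A x * \<eta> x \<partial>unifB1)) \<and>
    wstar \<noteq> 0 \<and>
    (AE x in unifB1. (2 * \<eta> x - 1) * (wstar \<bullet> x) \<ge> 0) \<and>
    (\<forall>x\<in>B1. \<bar>\<eta> x - (1 - \<eta> x)\<bar> \<ge> \<beta>) \<and>
    (\<exists>\<epsilon>>0. \<forall>\<delta>>0. \<exists>m. \<forall>n\<ge>m.
       \<exists>E\<in>sets (PiM {..<n} (\<lambda>_. D)).
         measure (PiM {..<n} (\<lambda>_. D)) E \<ge> 1 - \<delta> \<and>
         (\<forall>S\<in>E. \<forall>w. hinge_minimizer \<tau> n S w \<longrightarrow> err D w - err D wstar > \<epsilon>))"
proof -
  define \<nu> where "\<nu> = (1 - \<beta>) / 4"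
  have \<nu>: "0 < \<nu>" "\<nu> < 1/2"
    using assms by (auto simp: \<nu>_def)
  have "\<forall>x. 0 \<le> eta \<nu> x \<and> eta \<nu> x \<le> 1"
    using \<nu> by (auto simp: eta_def)
  moreover have "\<forall>A\<in>sets borel. measure (D_noisy \<nu>) (A \<times> {1}) = (\<integral>x. indicator A x * eta \<nu> x \<partial>unifB1)"
    using \<nu> by (auto intro: measure_D_noisy_label_1)
  moreover have "AE x in unifB1. (2 * eta \<nu> x - 1) * (axis 1 1 \<bullet> x) \<ge> 0"
    using \<nu> eta_agrees_with_axis_1 by simp
  moreover have "\<forall>x\<in>B1. \<bar>eta \<nu> x - (1 - eta \<nu> x)\<bar> \<ge> \<beta>"
    using eta_margin assms(3) unfolding \<nu>_def by blast
  ultimately show ?thesis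
    using prob_space_D_noisy AE_D_noisy distr_D_noisy_fst
      hinge_minimizer_excess_error[OF assms(1) \<nu>]
    by (intro exI[of _ "D_noisy \<nu>"] exI[of _ "eta \<nu>"] exI[of _ "axis 1 1"]) (simp add: axis_eq_0_iff)
qed

end
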